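(* Let $S$ be a $\Gamma$-hemiring. If $\mu$ is a prime fuzzy h-ideal of $S$, then for all $x,y\in S$, $\inf_{s\in S,\ \alpha,\gamma\in\Gamma}\mu(x\alpha s\gamma y)=\max\{\mu(x),\mu(y)\}$. Conversely, if $\mu$ is a fuzzy h-ideal of $S$ with $\operatorname{Im}\mu=\{1,t\}$ for some $t\in[0,1)$ such that $\inf_{s\in S,\ \alpha,\gamma\in\Gamma}\mu(x\alpha s\gamma y)=\max\{\mu(x),\mu(y)\}$ for all $x,y\in S$, then $\mu$ is a prime fuzzy h-ideal of $S$.
   Context: A $\Gamma$-hemiring is a pair of additive commutative semigroups with zero $S$ and $\Gamma$ with a map $S\times\Gamma\times S\to S$, $(a,\alpha,b)\mapsto a\alpha b$, such that for all $a,b,c\in S$, $\alpha,\beta\in\Gamma$: $(a+b)\alpha c=a\alpha c+b\alpha c$; $a\alpha(b+c)=a\alpha b+a\alpha c$; $a(\alpha+\beta)b=a\alpha b+a\beta b$; $a\alpha(b\beta c)=(a\alpha b)\beta c$; $0\alpha a=0=a\alpha0$; $a0b=0=b0a$. A fuzzy h-ideal of $S$ is a map $\mu:S\to[0,1]$, not identically $0$, such that for all $x,y,a,b,z\in S$, $\gamma\in\Gamma$: $\mu(x+y)\ge\min\{\mu(x),\mu(y)\}$; $\mu(x\gamma y)\ge\mu(x)$ and $\mu(x\gamma y)\ge\mu(y)$; $x+a+z=b+z$ implies $\mu(x)\ge\min\{\mu(a),\mu(b)\}$. For fuzzy subsets $\sigma,\theta$, the h-product is $(\sigma\Gamma_h\theta)(x)=\sup\min\{\sigma(a_1),\sigma(a_2),\theta(b_1),\theta(b_2)\}$,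 the supremum over all $z,a_1,a_2,b_1,b_2\in S$, $\gamma,\delta\in\Gamma$ with $x+a_1\gamma b_1+z=a_2\delta b_2+z$, and $0$ if no such expression exists. Inclusion $\sigma\subseteq\mu$ means $\sigma(x)\le\mu(x)$ for all $x$. A fuzzy h-ideal $\mu$ is prime if $\mu$ is not constant and for any fuzzy h-ideals $\sigma,\theta$ of $S$, $\sigma\Gamma_h\theta\subseteq\mu$ implies $\sigma\subseteq\mu$ or $\theta\subseteq\mu$. $\operatorname{Im}\mu$ is the image of $\mu$. *)

theory Defs
  imports Complex_Main
begin

definition gamma_hemiring :: "('a::comm_monoid_add \<Rightarrow> 'g::comm_monoid_add \<Rightarrow> 'a \<Rightarrow> 'a) \<Rightarrow> bool" where
  "gamma_hemiring m \<longleftrightarrow>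
     (\<forall>a b c \<alpha>. m (a + b) \<alpha> c = m a \<alpha> c + m b \<alpha> c) \<and>
     (\<forall>a b c \<alpha>. m a \<alpha> (b + c) = m a \<alpha> b + m a \<alpha> c) \<and>
     (\<forall>a b \<alpha> \<beta>. m a (\<alpha> + \<beta>) b = m a \<alpha> b + m a \<beta> b) \<and>
     (\<forall>a b c \<alpha> \<beta>. m a \<alpha> (m b \<beta> c) = m (m a \<alpha> b) \<beta> c) \<and>
     (\<forall>a \<alpha>. m 0 \<alpha> a = 0 \<and> m a \<alpha> 0 = 0) \<and>
     (\<forall>a b. m a 0 b = 0 \<and> m b 0 a = 0)"

definition fuzzy_subset :: "('a \<Rightarrow> real) \<Rightarrow> bool" where
  "fuzzy_subset \<mu> \<longleftrightarrow> (\<forall>x. 0 \<le> \<mu> x \<and> \<mu> x \<le> 1)"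

definition fuzzy_h_ideal :: "('a::comm_monoid_add \<Rightarrow> 'g \<Rightarrow> 'a \<Rightarrow> 'a) \<Rightarrow> ('a \<Rightarrow> real) \<Rightarrow> bool" where
  "fuzzy_h_ideal m \<mu> \<longleftrightarrow> fuzzy_subset \<mu> \<and> (\<exists>x. \<mu> x \<noteq> 0) \<and>
     (\<forall>x y. \<mu> (x + y) \<ge> min (\<mu> x) (\<mu> y)) \<and>
     (\<forall>x y \<gamma>. \<mu> (m x \<gamma> y) \<ge> \<mu> x \<and> \<mu> (m x \<gamma> y) \<ge> \<mu> y) \<and>
     (\<forall>x a b z. x + a + z = b + z \<longrightarrow> \<mu> x \<ge> min (\<mu> a) (\<mu> b))"

definition h_product_vals :: "('a::comm_monoid_add \<Rightarrow> 'g \<Rightarrow> 'a \<Rightarrow> 'a) \<Rightarrow> ('a \<Rightarrow> real) \<Rightarrow> ('a \<Rightarrow> real) \<Rightarrow> 'a \<Rightarrow> real set" where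
  "h_product_vals m \<sigma> \<theta> x =
     {min (min (\<sigma> a1) (\<sigma> a2)) (min (\<theta> b1) (\<theta> b2)) | z a1 a2 b1 b2 \<gamma> \<delta>.
         x + m a1 \<gamma> b1 + z = m a2 \<delta> b2 + z}"

definition h_product :: "('a::comm_monoid_add \<Rightarrow> 'g \<Rightarrow> 'a \<Rightarrow> 'a) \<Rightarrow> ('a \<Rightarrow> real) \<Rightarrow> ('a \<Rightarrow> real) \<Rightarrow> 'a \<Rightarrow> real" where
  "h_product m \<sigma> \<theta> x = (if h_product_vals m \<sigma> \<theta> x = {} then 0 else Sup (h_product_vals m \<sigma> \<theta> x))"

definition prime_fuzzy_h_ideal :: "('a::comm_monoid_add \<Rightarrow> 'g \<Rightarrow> 'a \<Rightarrow> 'a) \<Rightarrow> ('a \<Rightarrow> real) \<Rightarrow> bool" where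
  "prime_fuzzy_h_ideal m \<mu> \<longleftrightarrow> fuzzy_h_ideal m \<mu> \<and> \<not> (\<exists>c. \<forall>x. \<mu> x = c) \<and>
     (\<forall>\<sigma> \<theta>. fuzzy_h_ideal m \<sigma> \<and> fuzzy_h_ideal m \<theta> \<and> (\<forall>x. h_product m \<sigma> \<theta> x \<le> \<mu> x)
        \<longrightarrow> (\<forall>x. \<sigma> x \<le> \<mu> x) \<or> (\<forall>x. \<theta> x \<le> \<mu> x))"

end

theory Submission
  imports Defs
begin

text \<open>
  The infimum I of \<mu>(x\<alpha>s\<gamma>y) is at least max (\<mu> x) (\<mu> y) by the ideal axioms alone.
  If \<mu> is prime and max (\<mu> x) (\<mu> y) < I, the level set
  U = {w. I \<le> \<mu> w} is an h-ideal, and so are A = {a. a\<Gamma>S\<Gamma>y \<subseteq> U} and the right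
  annihilator B of A modulo U. Applying primeness to the fuzzy ideals I \<cdot> \<chi>(A) and I \<cdot> \<chi>(B)
  (whose h-product lies below \<mu> since A\<Gamma>B \<subseteq> U) forces B \<subseteq> U, as x \<in> A - U. Hence
  S\<Gamma>y \<subseteq> U, i.e. y lies in the right annihilator D of S modulo U, and primeness
  applied to I \<cdot> \<chi>(D) twice gives y \<in> U, a contradiction.

  Conversely, if \<mu> takes only the values 1 and t < 1 and \<sigma>, \<theta> exceed \<mu> at a and b,
  then \<mu> a = \<mu> b = t, so the infimum over a\<alpha>s\<gamma>b is t and is attained at some w;
  but (\<sigma> \<Gamma>h \<theta>) w \<ge> min (\<sigma> a) (\<theta> b) > t = \<mu> w.
\<close>

lemma gamma_hemiring_add_left: "gamma_hemiring m \<Longrightarrow> m (a + b) \<alpha> c = m a \<alpha> c + m b \<alpha> c"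
  by (simp add: gamma_hemiring_def)

lemma gamma_hemiring_add_right: "gamma_hemiring m \<Longrightarrow> m a \<alpha> (b + c) = m a \<alpha> b + m a \<alpha> c"
  by (simp add: gamma_hemiring_def)

lemma gamma_hemiring_assoc: "gamma_hemiring m \<Longrightarrow> m a \<alpha> (m b \<beta> c) = m (m a \<alpha> b) \<beta> c"
  by (simp add: gamma_hemiring_def)

lemma gamma_hemiring_zero_left: "gamma_hemiring m \<Longrightarrow> m 0 \<alpha> a = 0"
  by (simp add: gamma_hemiring_def)

lemma gamma_hemiring_zero_right: "gamma_hemiring m \<Longrightarrow> m a \<alpha> 0 = 0"
  by (simp add: gamma_hemiring_def)

lemma fuzzy_h_ideal_nonneg: "fuzzy_h_ideal m \<mu> \<Longrightarrow> 0 \<le> \<mu> x"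
  by (simp add: fuzzy_h_ideal_def fuzzy_subset_def)

lemma fuzzy_h_ideal_le_one: "fuzzy_h_ideal m \<mu> \<Longrightarrow> \<mu> x \<le> 1"
  by (simp add: fuzzy_h_ideal_def fuzzy_subset_def)

lemma fuzzy_h_ideal_add: "fuzzy_h_ideal m \<mu> \<Longrightarrow> min (\<mu> x) (\<mu> y) \<le> \<mu> (x + y)"
  by (simp add: fuzzy_h_ideal_def)

lemma fuzzy_h_ideal_h_closed:
  "fuzzy_h_ideal m \<mu> \<Longrightarrow> x + a + z = b + z \<Longrightarrow> min (\<mu> a) (\<mu> b) \<le> \<mu> x"
  unfolding fuzzy_h_ideal_def by blast

lemma fuzzy_h_ideal_mult_left: "fuzzy_h_ideal m \<mu> \<Longrightarrow> \<mu> x \<le> \<mu> (m x \<gamma> y)"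
  by (simp add: fuzzy_h_ideal_def)

lemma fuzzy_h_ideal_mult_right: "fuzzy_h_ideal m \<mu> \<Longrightarrow> \<mu> y \<le> \<mu> (m x \<gamma> y)"
  by (simp add: fuzzy_h_ideal_def)

lemma fuzzy_h_ideal_le_zero:
  "gamma_hemiring m \<Longrightarrow> fuzzy_h_ideal m \<mu> \<Longrightarrow> \<mu> x \<le> \<mu> 0"
  using fuzzy_h_ideal_mult_left[of m \<mu> x 0 0] gamma_hemiring_zero_right[of m x 0] by simp

definition h_ideal :: "('a::comm_monoid_add \<Rightarrow> 'g \<Rightarrow> 'a \<Rightarrow> 'a) \<Rightarrow> 'a set \<Rightarrow> bool" where
  "h_ideal m A \<longleftrightarrow> 0 \<in> A \<and> (\<forall>a\<in>A. \<forall>b\<in>A. a + b \<in> A) \<and>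
     (\<forall>a\<in>A. \<forall>b \<gamma>. m a \<gamma> b \<in> A \<and> m b \<gamma> a \<in> A) \<and>
     (\<forall>x a b z. x + a + z = b + z \<longrightarrow> a \<in> A \<longrightarrow> b \<in> A \<longrightarrow> x \<in> A)"

lemma h_idealI:
  assumes "0 \<in> A" "\<And>a b. a \<in> A \<Longrightarrow> b \<in> A \<Longrightarrow> a + b \<in> A"
    and "\<And>a b \<gamma>. a \<in> A \<Longrightarrow> m a \<gamma> b \<in> A" "\<And>a b \<gamma>. a \<in> A \<Longrightarrow> m b \<gamma> a \<in> A"
    and "\<And>x a b z. x + a + z = b + z \<Longrightarrow> a \<in> A \<Longrightarrow> b \<in> A \<Longrightarrow> x \<in> A"
  shows "h_ideal m A"
  using assms unfolding h_ideal_def by blast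

lemma h_ideal_mult_left: "h_ideal m A \<Longrightarrow> a \<in> A \<Longrightarrow> m a \<gamma> b \<in> A"
  by (simp add: h_ideal_def)

lemma h_ideal_h_closed: "h_ideal m A \<Longrightarrow> x + a + z = b + z \<Longrightarrow> a \<in> A \<Longrightarrow> b \<in> A \<Longrightarrow> x \<in> A"
  unfolding h_ideal_def by blast

lemma h_ideal_level_set:
  assumes \<mu>: "fuzzy_h_ideal m \<mu>" and "c \<le> \<mu> 0"
  shows "h_ideal m {w. c \<le> \<mu> w}"
proof (rule h_idealI)
  fix a b assume "a \<in> {w. c \<le> \<mu> w}" "b \<in> {w. c \<le> \<mu> w}"
  then show "a + b \<in> {w. c \<le> \<mu> w}"
    using fuzzy_h_ideal_add[OF \<mu>, of a b] by simp
next
  fix x a b z assume "x + a + z = b + z" "a \<in> {w. c \<le> \<mu> w}" "b \<in> {w. c \<le> \<mu> w}"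
  then show "x \<in> {w. c \<le> \<mu> w}"
    using fuzzy_h_ideal_h_closed[OF \<mu>] by fastforce
next
  fix a b \<gamma> assume "a \<in> {w. c \<le> \<mu> w}"
  then show "m a \<gamma> b \<in> {w. c \<le> \<mu> w}" "m b \<gamma> a \<in> {w. c \<le> \<mu> w}"
    using fuzzy_h_ideal_mult_left[OF \<mu>, of a \<gamma> b] fuzzy_h_ideal_mult_right[OF \<mu>, of a b \<gamma>]
    by simp_all
qed (use assms in simp)

lemma h_ideal_left_quotient:
  assumes gh: "gamma_hemiring m" and U: "h_ideal m U"
  shows "h_ideal m {a. \<forall>\<alpha> s \<gamma>. m (m a \<alpha> s) \<gamma> y \<in> U}"
proof (rule h_idealI)
  show "0 \<in> {a. \<forall>\<alpha> s \<gamma>. m (m a \<alpha> s) \<gamma> y \<in> U}"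
    using U by (simp add: h_ideal_def gamma_hemiring_zero_left[OF gh])
next
  fix a b assume "a \<in> {a. \<forall>\<alpha> s \<gamma>. m (m a \<alpha> s) \<gamma> y \<in> U}" "b \<in> {a. \<forall>\<alpha> s \<gamma>. m (m a \<alpha> s) \<gamma> y \<in> U}"
  then show "a + b \<in> {a. \<forall>\<alpha> s \<gamma>. m (m a \<alpha> s) \<gamma> y \<in> U}"
    using U by (simp add: h_ideal_def gamma_hemiring_add_left[OF gh])
next
  fix a b \<gamma> assume a: "a \<in> {a. \<forall>\<alpha> s \<gamma>. m (m a \<alpha> s) \<gamma> y \<in> U}"
  have "m (m a \<gamma> (m b \<alpha> s)) \<gamma>' y \<in> U" for \<alpha> s \<gamma>'
    using a by simp
  then show "m a \<gamma> b \<in> {a. \<forall>\<alpha> s \<gamma>. m (m a \<alpha> s) \<gamma> y \<in> U}"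
    by (simp add: gamma_hemiring_assoc[OF gh])
  have "m b \<gamma> (m (m a \<alpha> s) \<gamma>' y) \<in> U" for \<alpha> s \<gamma>'
    using a U by (simp add: h_ideal_def)
  then show "m b \<gamma> a \<in> {a. \<forall>\<alpha> s \<gamma>. m (m a \<alpha> s) \<gamma> y \<in> U}"
    by (simp add: gamma_hemiring_assoc[OF gh])
next
  fix x a b z assume e: "x + a + z = b + z"
    and a: "a \<in> {a. \<forall>\<alpha> s \<gamma>. m (m a \<alpha> s) \<gamma> y \<in> U}" and b: "b \<in> {a. \<forall>\<alpha> s \<gamma>. m (m a \<alpha> s) \<gamma> y \<in> U}"
  have "m (m x \<alpha> s) \<gamma> y \<in> U" for \<alpha> s \<gamma>
  proof (rule h_ideal_h_closed[OF U])
    show "m (m x \<alpha> s) \<gamma> y + m (m a \<alpha> s) \<gamma> y + m (m z \<alpha> s) \<gamma> y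
      = m (m b \<alpha> s) \<gamma> y + m (m z \<alpha> s) \<gamma> y"
      using arg_cong[OF e, of "\<lambda>w. m (m w \<alpha> s) \<gamma> y"] by (simp add: gamma_hemiring_add_left[OF gh])
  qed (use a b in simp_all)
  then show "x \<in> {a. \<forall>\<alpha> s \<gamma>. m (m a \<alpha> s) \<gamma> y \<in> U}" by simp
qed

lemma h_ideal_right_annihilator:
  assumes gh: "gamma_hemiring m" and U: "h_ideal m U"
    and A: "\<And>a \<delta> s. a \<in> A \<Longrightarrow> m a \<delta> s \<in> A"
  shows "h_ideal m {b. \<forall>a\<in>A. \<forall>\<gamma>. m a \<gamma> b \<in> U}"
proof (rule h_idealI)
  show "0 \<in> {b. \<forall>a\<in>A. \<forall>\<gamma>. m a \<gamma> b \<in> U}"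
    using U by (simp add: h_ideal_def gamma_hemiring_zero_right[OF gh])
next
  fix b b' assume "b \<in> {b. \<forall>a\<in>A. \<forall>\<gamma>. m a \<gamma> b \<in> U}" "b' \<in> {b. \<forall>a\<in>A. \<forall>\<gamma>. m a \<gamma> b \<in> U}"
  then show "b + b' \<in> {b. \<forall>a\<in>A. \<forall>\<gamma>. m a \<gamma> b \<in> U}"
    using U by (simp add: h_ideal_def gamma_hemiring_add_right[OF gh])
next
  fix b s \<gamma> assume b: "b \<in> {b. \<forall>a\<in>A. \<forall>\<gamma>. m a \<gamma> b \<in> U}"
  have "m (m a \<gamma>' b) \<gamma> s \<in> U" if "a \<in> A" for a \<gamma>'
    using b U that by (simp add: h_ideal_def)
  then show "m b \<gamma> s \<in> {b. \<forall>a\<in>A. \<forall>\<gamma>. m a \<gamma> b \<in> U}"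
    by (simp add: gamma_hemiring_assoc[OF gh])
  have "m (m a \<gamma>' s) \<gamma> b \<in> U" if "a \<in> A" for a \<gamma>'
    using b A that by simp
  then show "m s \<gamma> b \<in> {b. \<forall>a\<in>A. \<forall>\<gamma>. m a \<gamma> b \<in> U}"
    by (simp add: gamma_hemiring_assoc[OF gh])
next
  fix x b b' z assume e: "x + b + z = b' + z"
    and b: "b \<in> {b. \<forall>a\<in>A. \<forall>\<gamma>. m a \<gamma> b \<in> U}" and b': "b' \<in> {b. \<forall>a\<in>A. \<forall>\<gamma>. m a \<gamma> b \<in> U}"
  have "m a \<gamma> x \<in> U" if "a \<in> A" for a \<gamma>
  proof (rule h_ideal_h_closed[OF U])
    show "m a \<gamma> x + m a \<gamma> b + m a \<gamma> z = m a \<gamma> b' + m a \<gamma> z"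
      using arg_cong[OF e, of "m a \<gamma>"] by (simp add: gamma_hemiring_add_right[OF gh])
  qed (use b b' that in simp_all)
  then show "x \<in> {b. \<forall>a\<in>A. \<forall>\<gamma>. m a \<gamma> b \<in> U}" by simp
qed

lemma fuzzy_h_ideal_scaled_indicator:
  assumes "h_ideal m A" "0 < c" "c \<le> 1"
  shows "fuzzy_h_ideal m (\<lambda>a. if a \<in> A then c else 0)"
  using assms unfolding h_ideal_def fuzzy_h_ideal_def fuzzy_subset_def
  by (auto 0 4)

lemma h_product_scaled_indicators_le:
  assumes \<mu>: "fuzzy_h_ideal m \<mu>" and "0 \<le> c"
    and AB: "\<And>a b \<gamma>. a \<in> A \<Longrightarrow> b \<in> B \<Longrightarrow> c \<le> \<mu> (m a \<gamma> b)"
  shows "h_product m (\<lambda>a. if a \<in> A then c else 0) (\<lambda>b. if b \<in> B then c else 0) w \<le> \<mu> w"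
proof -
  let ?V = "h_product_vals m (\<lambda>a. if a \<in> A then c else 0) (\<lambda>b. if b \<in> B then c else 0) w"
  have "v \<le> \<mu> w" if "v \<in> ?V" for v
  proof -
    from that obtain z a1 a2 b1 b2 \<gamma> \<delta> where e: "w + m a1 \<gamma> b1 + z = m a2 \<delta> b2 + z"
      and v: "v = min (min (if a1 \<in> A then c else 0) (if a2 \<in> A then c else 0))
                       (min (if b1 \<in> B then c else 0) (if b2 \<in> B then c else 0))"
      unfolding h_product_vals_def by blast
    show ?thesis
    proof (cases "a1 \<in> A \<and> a2 \<in> A \<and> b1 \<in> B \<and> b2 \<in> B")
      case True
      then have "c \<le> \<mu> (m a1 \<gamma> b1)" "c \<le> \<mu> (m a2 \<delta> b2)" using AB by auto
      moreover have "min (\<mu> (m a1 \<gamma> b1)) (\<mu> (m a2 \<delta> b2)) \<le> \<mu> w"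
        using \<mu> e unfolding fuzzy_h_ideal_def by blast
      ultimately show ?thesis using True v by simp
    next
      case False
      then have "v \<le> 0" unfolding v by (auto simp: min_le_iff_disj)
      then show ?thesis using fuzzy_h_ideal_nonneg[OF \<mu>, of w] by linarith
    qed
  qed
  then show ?thesis
    using fuzzy_h_ideal_nonneg[OF \<mu>, of w] by (simp add: h_product_def cSup_least)
qed

lemma prime_fuzzy_h_idealD:
  assumes "prime_fuzzy_h_ideal m \<mu>" "fuzzy_h_ideal m \<sigma>" "fuzzy_h_ideal m \<theta>"
    and "\<And>x. h_product m \<sigma> \<theta> x \<le> \<mu> x"
  shows "(\<forall>x. \<sigma> x \<le> \<mu> x) \<or> (\<forall>x. \<theta> x \<le> \<mu> x)"
  using assms unfolding prime_fuzzy_h_ideal_def by blast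

lemma prime_fuzzy_h_ideal_level_set:
  assumes prime: "prime_fuzzy_h_ideal m \<mu>" and "h_ideal m A" "h_ideal m B"
    and c: "0 < c" "c \<le> 1"
    and AB: "\<And>a b \<gamma>. a \<in> A \<Longrightarrow> b \<in> B \<Longrightarrow> c \<le> \<mu> (m a \<gamma> b)"
  shows "A \<subseteq> {w. c \<le> \<mu> w} \<or> B \<subseteq> {w. c \<le> \<mu> w}"
proof -
  have "fuzzy_h_ideal m \<mu>" using prime by (simp add: prime_fuzzy_h_ideal_def)
  then have "h_product m (\<lambda>a. if a \<in> A then c else 0) (\<lambda>b. if b \<in> B then c else 0) w \<le> \<mu> w" for w
    using c AB by (intro h_product_scaled_indicators_le) auto
  then have "(\<forall>x. (if x \<in> A then c else 0) \<le> \<mu> x) \<or> (\<forall>x. (if x \<in> B then c else 0) \<le> \<mu> x)"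
    using assms by (intro prime_fuzzy_h_idealD fuzzy_h_ideal_scaled_indicator)
  then show ?thesis by (auto split: if_splits)
qed

lemma max_le_INF_sandwich:
  fixes m :: "'a::comm_monoid_add \<Rightarrow> 'g::comm_monoid_add \<Rightarrow> 'a \<Rightarrow> 'a"
  assumes "fuzzy_h_ideal m \<mu>"
  shows "max (\<mu> x) (\<mu> y) \<le> (INF p \<in> (UNIV :: ('a \<times> 'g \<times> 'g) set).
                       \<mu> (m (m x (fst (snd p)) (fst p)) (snd (snd p)) y))"
  using fuzzy_h_ideal_mult_left[OF assms] fuzzy_h_ideal_mult_right[OF assms]
  by (intro cINF_greatest) (auto intro: order_trans)

lemma prime_INF_sandwich_le_max:
  fixes m :: "'a::comm_monoid_add \<Rightarrow> 'g::comm_monoid_add \<Rightarrow> 'a \<Rightarrow> 'a"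
  assumes gh: "gamma_hemiring m" and prime: "prime_fuzzy_h_ideal m \<mu>"
  shows "(INF p \<in> (UNIV :: ('a \<times> 'g \<times> 'g) set).
            \<mu> (m (m x (fst (snd p)) (fst p)) (snd (snd p)) y)) \<le> max (\<mu> x) (\<mu> y)"
    (is "?I \<le> _")
proof (rule ccontr)
  assume "\<not> ?I \<le> max (\<mu> x) (\<mu> y)"
  then have gt: "max (\<mu> x) (\<mu> y) < ?I" by linarith
  have \<mu>: "fuzzy_h_ideal m \<mu>" using prime by (simp add: prime_fuzzy_h_ideal_def)
  have bdd: "bdd_below (range (\<lambda>p. \<mu> (m (m x (fst (snd p)) (fst p)) (snd (snd p)) y)))"
    using fuzzy_h_ideal_nonneg[OF \<mu>] by (intro bdd_belowI[where m=0]) auto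
  have lower: "?I \<le> \<mu> (m (m x \<alpha> s) \<gamma> y)" for \<alpha> s \<gamma>
    using cINF_lower[OF bdd, of "(s, \<alpha>, \<gamma>)"] by simp
  have I_le_0: "?I \<le> \<mu> 0"
    using lower[of 0 0 0] by (simp add: gamma_hemiring_zero_right[OF gh] gamma_hemiring_zero_left[OF gh])
  have I_pos: "0 < ?I" using gt fuzzy_h_ideal_nonneg[OF \<mu>, of x] by linarith
  have I_le_1: "?I \<le> 1" using I_le_0 fuzzy_h_ideal_le_one[OF \<mu>, of 0] by linarith
  define U where "U = {w. ?I \<le> \<mu> w}"
  have U: "h_ideal m U" unfolding U_def using \<mu> I_le_0 by (rule h_ideal_level_set)
  define A where "A = {a. \<forall>\<alpha> s \<gamma>. m (m a \<alpha> s) \<gamma> y \<in> U}"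
  have A: "h_ideal m A" unfolding A_def using gh U by (rule h_ideal_left_quotient)
  define B where "B = {b. \<forall>a\<in>A. \<forall>\<gamma>. m a \<gamma> b \<in> U}"
  have B: "h_ideal m B"
    unfolding B_def using gh U h_ideal_mult_left[OF A] by (rule h_ideal_right_annihilator)
  define D where "D = {b. \<forall>a \<in> UNIV. \<forall>\<gamma>. m a \<gamma> b \<in> U}"
  have "x \<in> A" "x \<notin> U" using lower gt by (auto simp: A_def U_def)
  then have "B \<subseteq> U"
    using prime_fuzzy_h_ideal_level_set[OF prime A B I_pos I_le_1] by (auto simp: B_def U_def)
  moreover have "m s \<delta> y \<in> B" for s \<delta>
    by (auto simp: A_def B_def gamma_hemiring_assoc[OF gh])
  ultimately have "y \<in> D" by (auto simp: D_def)
  have D: "h_ideal m D" unfolding D_def using gh U by (rule h_ideal_right_annihilator) simp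
  have "D \<subseteq> U"
    using prime_fuzzy_h_ideal_level_set[OF prime D D I_pos I_le_1] by (auto simp: D_def U_def)
  then show False using \<open>y \<in> D\<close> gt by (auto simp: U_def)
qed

lemma min_le_h_product_mult:
  assumes gh: "gamma_hemiring m" and \<sigma>: "fuzzy_h_ideal m \<sigma>"
  shows "min (\<sigma> a) (\<theta> b) \<le> h_product m \<sigma> \<theta> (m a \<gamma> b)"
proof -
  have "m a \<gamma> b + m 0 \<gamma> b + 0 = m a \<gamma> b + 0" by (simp add: gamma_hemiring_zero_left[OF gh])
  then have v: "min (min (\<sigma> 0) (\<sigma> a)) (min (\<theta> b) (\<theta> b)) \<in> h_product_vals m \<sigma> \<theta> (m a \<gamma> b)"
    unfolding h_product_vals_def by blast
  have "bdd_above (h_product_vals m \<sigma> \<theta> (m a \<gamma> b))"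
    using fuzzy_h_ideal_le_one[OF \<sigma>]
    by (intro bdd_aboveI[where M=1]) (auto simp: h_product_vals_def min_le_iff_disj)
  then have "min (min (\<sigma> 0) (\<sigma> a)) (min (\<theta> b) (\<theta> b)) \<le> h_product m \<sigma> \<theta> (m a \<gamma> b)"
    using v by (auto simp: h_product_def intro: cSup_upper)
  then show ?thesis using fuzzy_h_ideal_le_zero[OF gh \<sigma>, of a] by linarith
qed

lemma INF_finite_range_attained:
  fixes f :: "'b \<Rightarrow> real"
  assumes "finite (range f)"
  shows "\<exists>p. f p = (INF p. f p)"
  using Min_in[OF assms] cInf_eq_Min[OF assms] by (metis UNIV_not_empty image_is_empty rangeE)

lemma two_valued_INF_sandwich_prime:
  fixes m :: "'a::comm_monoid_add \<Rightarrow> 'g::comm_monoid_add \<Rightarrow> 'a \<Rightarrow> 'a"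
  assumes gh: "gamma_hemiring m" and \<mu>: "fuzzy_h_ideal m \<mu>"
    and t: "t < 1" "range \<mu> = {1, t}"
    and sandwich: "\<And>x y. (INF p \<in> (UNIV :: ('a \<times> 'g \<times> 'g) set).
                       \<mu> (m (m x (fst (snd p)) (fst p)) (snd (snd p)) y)) = max (\<mu> x) (\<mu> y)"
  shows "prime_fuzzy_h_ideal m \<mu>"
proof -
  have "\<not> (\<exists>c. \<forall>x. \<mu> x = c)"
  proof
    assume "\<exists>c. \<forall>x. \<mu> x = c"
    then obtain c where "range \<mu> = {c}" by auto
    then show False using t by (metis insertCI less_irrefl singletonD)
  qed
  moreover have "(\<forall>x. \<sigma> x \<le> \<mu> x) \<or> (\<forall>x. \<theta> x \<le> \<mu> x)"
    if \<sigma>: "fuzzy_h_ideal m \<sigma>" and \<theta>: "fuzzy_h_ideal m \<theta>"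
      and product: "\<forall>x. h_product m \<sigma> \<theta> x \<le> \<mu> x" for \<sigma> \<theta>
  proof (rule ccontr)
    assume "\<not> ?thesis"
    then obtain a b where a: "\<mu> a < \<sigma> a" and b: "\<mu> b < \<theta> b" by (meson not_le)
    have "\<mu> a \<noteq> 1" "\<mu> b \<noteq> 1"
      using a b fuzzy_h_ideal_le_one[OF \<sigma>, of a] fuzzy_h_ideal_le_one[OF \<theta>, of b] by linarith+
    then have "\<mu> a = t" "\<mu> b = t" using t(2) by blast+
    define f where "f = (\<lambda>p :: 'a \<times> 'g \<times> 'g. \<mu> (m (m a (fst (snd p)) (fst p)) (snd (snd p)) b))"
    have "range f \<subseteq> range \<mu>" by (auto simp: f_def)
    then have "finite (range f)" using t(2) finite_subset by auto
    then obtain p where "f p = (INF p. f p)" using INF_finite_range_attained by blast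
    also have "\<dots> = t" using sandwich[of a b] \<open>\<mu> a = t\<close> \<open>\<mu> b = t\<close> by (simp add: f_def)
    finally have "\<mu> (m (m a (fst (snd p)) (fst p)) (snd (snd p)) b) = t" by (simp add: f_def)
    moreover have "min (\<sigma> (m a (fst (snd p)) (fst p))) (\<theta> b)
        \<le> h_product m \<sigma> \<theta> (m (m a (fst (snd p)) (fst p)) (snd (snd p)) b)"
      by (rule min_le_h_product_mult[OF gh \<sigma>])
    moreover have "\<sigma> a \<le> \<sigma> (m a (fst (snd p)) (fst p))"
      by (rule fuzzy_h_ideal_mult_left[OF \<sigma>])
    ultimately show False
      using a b product \<open>\<mu> a = t\<close> \<open>\<mu> b = t\<close> by (smt (verit))
  qed
  ultimately show ?thesis using \<mu> unfolding prime_fuzzy_h_ideal_def by blast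
qed

theorem proposition3p16:
  fixes m :: "'a::comm_monoid_add \<Rightarrow> 'g::comm_monoid_add \<Rightarrow> 'a \<Rightarrow> 'a"
    and \<mu> :: "'a \<Rightarrow> real"
  assumes "gamma_hemiring m"
  shows "(prime_fuzzy_h_ideal m \<mu> \<longrightarrow>
            (\<forall>x y. (INF p \<in> (UNIV :: ('a \<times> 'g \<times> 'g) set).
                       \<mu> (m (m x (fst (snd p)) (fst p)) (snd (snd p)) y)) = max (\<mu> x) (\<mu> y)))
       \<and> ((fuzzy_h_ideal m \<mu> \<and> (\<exists>t. 0 \<le> t \<and> t < 1 \<and> range \<mu> = {1, t}) \<and>
            (\<forall>x y. (INF p \<in> (UNIV :: ('a \<times> 'g \<times> 'g) set).
                       \<mu> (m (m x (fst (snd p)) (fst p)) (snd (snd p)) y)) = max (\<mu> x) (\<mu> y)))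
          \<longrightarrow> prime_fuzzy_h_ideal m \<mu>)"
proof (intro conjI impI allI)
  fix x y assume prime: "prime_fuzzy_h_ideal m \<mu>"
  then have "fuzzy_h_ideal m \<mu>" by (simp add: prime_fuzzy_h_ideal_def)
  then show "(INF p \<in> (UNIV :: ('a \<times> 'g \<times> 'g) set).
                \<mu> (m (m x (fst (snd p)) (fst p)) (snd (snd p)) y)) = max (\<mu> x) (\<mu> y)"
    by (intro order_antisym prime_INF_sandwich_le_max[OF assms prime] max_le_INF_sandwich)
next
  assume "fuzzy_h_ideal m \<mu> \<and> (\<exists>t. 0 \<le> t \<and> t < 1 \<and> range \<mu> = {1, t}) \<and>
            (\<forall>x y. (INF p \<in> (UNIV :: ('a \<times> 'g \<times> 'g) set).
                       \<mu> (m (m x (fst (snd p)) (fst p)) (snd (snd p)) y)) = max (\<mu> x) (\<mu> y))"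
  then obtain t where "fuzzy_h_ideal m \<mu>" "t < 1" "range \<mu> = {1, t}"
    and "\<And>x y. (INF p \<in> (UNIV :: ('a \<times> 'g \<times> 'g) set).
                 \<mu> (m (m x (fst (snd p)) (fst p)) (snd (snd p)) y)) = max (\<mu> x) (\<mu> y)"
    by blast
  then show "prime_fuzzy_h_ideal m \<mu>" by (rule two_valued_INF_sandwich_prime[OF assms])
qed

end
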